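(* For any $\beta,c\ge0$, $N\in\mathbb N$ and $\mathcal L\in\mathcal S$, one has $\widetilde G^{(i)}_N(\beta,c,\mathfrak L_{\mathcal L})=G^{(i)}_N(\beta,c,\mathcal L)$ for $i=1,2$.
   Context: Fix an integer $q\ge2$, $[q]=\{1,\dots,q\}$, $\pi_\lambda$ the Poisson($\lambda$) mass function. $\Delta$ is the set of $\boldsymbol\xi\in[0,1]^{\mathbb N}$ with $\xi_1\ge\xi_2\ge\cdots$ and $\sum\xi_n\le1$; $\Delta_1\subset\Delta$ those with $\sum\xi_n=1$. $[q]^{\mathbb N\times\mathbb N}$ is the set of $\mathcal T=(\tau^{(1)},\tau^{(2)},\dots)$ with $\tau^{(\alpha)}\in[q]^{\mathbb N}$. $\mathcal S$ is the set of Borel probability measures $\mathcal L$ on $\Delta\times[q]^{\mathbb N\times\mathbb N}$ with $\mathcal L(\boldsymbol\xi\in\Delta_1)=1$, invariant under $(\boldsymbol\xi,\mathcal T)\mapsto(\boldsymbol\xi,(\tau^{(1)}\circ\pi,\tau^{(2)}\circ\pi,\dots))$ for every finitely supported permutation $\pi$ of $\mathbb N$ ($(\tau\circ\pi)_n=\tau_{\pi(n)}$). For $\mathcal L\in\mathcal S$, $\mathfrak L_{\mathcal L}$ is the law of $(\tau^{(\mathfrak r_1)},\tau^{(\mathfrak r_2)},\dots)$ where $(\boldsymbol\xi,\mathcal T)\sim\mathcal L$ and, conditionally, $\mathfrak r_1,\mathfrak r_2,\dots$ are i.i.d. $\mathbb N$-valued with $\mathbb P(\mathfrak r_j=\alpha)=\xi_\alpha$.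 Let $\boldsymbol I$ be independent random with $|\boldsymbol I|\sim\pi_{cN}$ and, given $|\boldsymbol I|=k$, $I_1,\dots,I_k$ i.i.d. uniform on $\{1,\dots,N\}$ (expectation $\widetilde{\mathbb E}_{N,c}$); $\widetilde H_N(\boldsymbol I,\tau,\sigma)=\sum_{i=1}^{|\boldsymbol I|}\delta(\tau_i,\sigma_{I_i})$. $G^{(1)}_N(\beta,c,\mathcal L)=\int\widetilde{\mathbb E}_{N,c}\big[\frac1N\ln\sum_\alpha\xi_\alpha\sum_{\sigma\in[q]^N}e^{-\beta\widetilde H_N(\boldsymbol I,\tau^{(\alpha)},\sigma)}\big]d\mathcal L$ and $G^{(2)}_N(\beta,c,\mathcal L)=\int\sum_{K\ge0}\frac{\pi_{cN/2}(K)}{N}\ln\big(\sum_\alpha\xi_\alpha e^{-\beta\sum_{k=1}^K\delta(\tau^{(\alpha)}_{2k-1},\tau^{(\alpha)}_{2k})}\big)d\mathcal L$. For a probability measure $\mathfrak L$ on $[q]^{\mathbb N\times\mathbb N}$ and $R\in\mathbb N$: $G^{(1)}_{N,R}(\beta,c,\mathfrak L)=\int\widetilde{\mathbb E}_{N,c}\big[\frac1N\ln\sum_{r=1}^R\frac1R\sum_{\sigma}e^{-\beta\widetilde H_N(\boldsymbol I,\tau^{(r)},\sigma)}\big]d\mathfrak L$ and $G^{(2)}_{N,R}(\beta,c,\mathfrak L)=\int\sum_{K\ge0}\frac{\pi_{cN/2}(K)}{N}\ln\big(\sum_{r=1}^R\frac1Re^{-\beta\sum_{k=1}^K\delta(\tau^{(r)}_{2k-1},\tau^{(r)}_{2k})}\big)d\mathfrak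 L$, and $\widetilde G^{(i)}_N(\beta,c,\mathfrak L)=\lim_{R\to\infty}G^{(i)}_{N,R}(\beta,c,\mathfrak L)$. *)

theory Defs
  imports "HOL-Probability.Probability"
begin

text \<open>Conventions: sequences indexed by the paper's positive integers 1,2,3,... are
represented as functions on nat indexed from 0 (shift by one). Spins take values in
[q] = {1..q}; sites are {1..N}.\<close>

definition pois :: "real \<Rightarrow> nat \<Rightarrow> real" where
  "pois lam k = exp (- lam) * lam ^ k / fact k"

definition kdelta :: "nat \<Rightarrow> nat \<Rightarrow> real" where
  "kdelta a b = (if a = b then 1 else 0)"

definition Delta :: "(nat \<Rightarrow> real) set" where
  "Delta = {xi. (\<forall>n. 0 \<le> xi n \<and> xi n \<le> 1) \<and> (\<forall>n. xi (Suc n) \<le> xi n)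
                \<and> summable xi \<and> suminf xi \<le> 1}"

definition Delta1 :: "(nat \<Rightarrow> real) set" where
  "Delta1 = {xi \<in> Delta. suminf xi = 1}"

definition Mxi :: "(nat \<Rightarrow> real) measure" where
  "Mxi = PiM UNIV (\<lambda>_. borel)"

text \<open>Measurable space [q]^(N x N): T alpha n = tau^(alpha)_n.\<close>
definition MT :: "nat \<Rightarrow> (nat \<Rightarrow> nat \<Rightarrow> nat) measure" where
  "MT q = PiM UNIV (\<lambda>_. PiM UNIV (\<lambda>_. count_space {1..q}))"

definition finperm :: "(nat \<Rightarrow> nat) \<Rightarrow> bool" where
  "finperm p \<longleftrightarrow> bij p \<and> finite {n. p n \<noteq> n}"

definition S_laws :: "nat \<Rightarrow> ((nat \<Rightarrow> real) \<times> (nat \<Rightarrow> nat \<Rightarrow> nat)) measure set" where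
  "S_laws q = {L. prob_space L \<and> sets L = sets (Mxi \<Otimes>\<^sub>M MT q)
      \<and> emeasure L {x \<in> space L. fst x \<in> Delta1} = 1
      \<and> (\<forall>p. finperm p \<longrightarrow>
            distr L (Mxi \<Otimes>\<^sub>M MT q) (\<lambda>(xi, T). (xi, \<lambda>a n. T a (p n))) = L)}"

definition wmeas :: "(nat \<Rightarrow> real) \<Rightarrow> nat measure" where
  "wmeas xi = density (count_space UNIV) (\<lambda>n. ennreal (xi n))"

text \<open>The law frak L_L of (tau^(r_1), tau^(r_2), ...), r_j i.i.d. with P(r_j = alpha) = xi_alpha.
  (The else-branch is irrelevant since xi is in Delta1 almost surely.)\<close>
definition frakL :: "nat \<Rightarrow> ((nat \<Rightarrow> real) \<times> (nat \<Rightarrow> nat \<Rightarrow> nat)) measure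
                      \<Rightarrow> (nat \<Rightarrow> nat \<Rightarrow> nat) measure" where
  "frakL q L = bind L (\<lambda>(xi, T).
      if xi \<in> Delta1 then distr (PiM UNIV (\<lambda>_. wmeas xi)) (MT q) (\<lambda>r j. T (r j))
      else return (MT q) (\<lambda>_ _. 1))"

text \<open>Expectation over the random multiset I: |I| ~ Poisson(cN), I_1..I_k iid uniform on {1..N}.
  f k I with I restricted to {..<k} (I i is the paper's I_(i+1)).\<close>
definition EI :: "nat \<Rightarrow> real \<Rightarrow> (nat \<Rightarrow> (nat \<Rightarrow> nat) \<Rightarrow> real) \<Rightarrow> real" where
  "EI N c f = (\<Sum>k. pois (c * real N) k *
       ((\<Sum>I\<in>PiE {..<k} (\<lambda>_. {1..N}). f k I) / real N ^ k))"

definition Htil :: "nat \<Rightarrow> (nat \<Rightarrow> nat) \<Rightarrow> (nat \<Rightarrow> nat) \<Rightarrow> (nat \<Rightarrow> nat) \<Rightarrow> real" where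
  "Htil k I tau sg = (\<Sum>i<k. kdelta (tau i) (sg (I i)))"

definition spins :: "nat \<Rightarrow> nat \<Rightarrow> (nat \<Rightarrow> nat) set" where
  "spins q N = PiE {1..N} (\<lambda>_. {1..q})"

definition Zsite :: "nat \<Rightarrow> nat \<Rightarrow> real \<Rightarrow> nat \<Rightarrow> (nat \<Rightarrow> nat) \<Rightarrow> (nat \<Rightarrow> nat) \<Rightarrow> real" where
  "Zsite q N beta k I tau = (\<Sum>sg\<in>spins q N. exp (- beta * Htil k I tau sg))"

text \<open>sum_{k=1}^K delta(tau_(2k-1), tau_(2k)), 0-indexed.\<close>
definition Hpair :: "nat \<Rightarrow> (nat \<Rightarrow> nat) \<Rightarrow> real" where
  "Hpair K tau = (\<Sum>k<K. kdelta (tau (2 * k)) (tau (2 * k + 1)))"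

definition G1 :: "nat \<Rightarrow> nat \<Rightarrow> real \<Rightarrow> real \<Rightarrow>
    ((nat \<Rightarrow> real) \<times> (nat \<Rightarrow> nat \<Rightarrow> nat)) measure \<Rightarrow> real" where
  "G1 q N beta c L = (\<integral>x. (case x of (xi, T) \<Rightarrow>
      EI N c (\<lambda>k I. (1 / real N) * ln (\<Sum>a. xi a * Zsite q N beta k I (T a)))) \<partial>L)"

definition G2 :: "nat \<Rightarrow> real \<Rightarrow> real \<Rightarrow>
    ((nat \<Rightarrow> real) \<times> (nat \<Rightarrow> nat \<Rightarrow> nat)) measure \<Rightarrow> real" where
  "G2 N beta c L = (\<integral>x. (case x of (xi, T) \<Rightarrow>
      (\<Sum>K. pois (c * real N / 2) K / real N *
             ln (\<Sum>a. xi a * exp (- beta * Hpair K (T a))))) \<partial>L)"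

definition G1R :: "nat \<Rightarrow> nat \<Rightarrow> nat \<Rightarrow> real \<Rightarrow> real \<Rightarrow> (nat \<Rightarrow> nat \<Rightarrow> nat) measure \<Rightarrow> real" where
  "G1R q N R beta c FL = (\<integral>T.
      EI N c (\<lambda>k I. (1 / real N) * ln (\<Sum>r<R. (1 / real R) * Zsite q N beta k I (T r))) \<partial>FL)"

definition G2R :: "nat \<Rightarrow> nat \<Rightarrow> real \<Rightarrow> real \<Rightarrow> (nat \<Rightarrow> nat \<Rightarrow> nat) measure \<Rightarrow> real" where
  "G2R N R beta c FL = (\<integral>T.
      (\<Sum>K. pois (c * real N / 2) K / real N *
             ln (\<Sum>r<R. (1 / real R) * exp (- beta * Hpair K (T r)))) \<partial>FL)"

end

theory Submission
  imports Defs
begin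

text \<open>Given \<open>(\<xi>, T)\<close>, the columns of a sample from \<open>frakL q L\<close> are i.i.d. with law
  \<open>\<Sum>\<alpha>. \<xi> \<alpha> \<cdot> \<delta> (T \<alpha>)\<close>, so each partition function averaged over the first \<open>R\<close> sampled columns
  is an empirical mean of i.i.d. variables with values in \<open>[exp (- \<beta> k), b]\<close>. By the second
  moment bound it converges in \<open>L\<^sup>1\<close> at rate \<open>1 / sqrt R\<close> to the \<open>\<xi>\<close>-weighted average
  \<open>\<Sum>\<alpha>. \<xi> \<alpha> * Z (T \<alpha>)\<close>, and so does its logarithm, \<open>ln\<close> being Lipschitz on
  \<open>[exp (- \<beta> k), b]\<close>. The Poisson weights dominate the series over \<open>k\<close> by a summable
  sequence (Tannery's theorem), and dominated convergence over \<open>(\<xi>, T) \<sim> L\<close> finishes.\<close>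

lemma ln_diff_le_div:
  fixes a x y :: real
  assumes "0 < a" "a \<le> x" "a \<le> y"
  shows "\<bar>ln x - ln y\<bar> \<le> \<bar>x - y\<bar> / a"
proof -
  have "ln x - ln y \<le> (x - y) / y" if "0 < x" "0 < y" for x y :: real
    using ln_le_minus_one[of "x / y"] that by (simp add: ln_div field_simps)
  moreover have "\<bar>x - y\<bar> / y \<le> \<bar>x - y\<bar> / a" "\<bar>x - y\<bar> / x \<le> \<bar>x - y\<bar> / a"
    using assms by (simp_all add: frac_le)
  ultimately show ?thesis
    using assms by (smt (verit, best) divide_right_mono)
qed

lemma empirical_mean_bounds:
  fixes f :: "nat \<Rightarrow> real"
  assumes "0 < R" "\<And>r. a \<le> f r" "\<And>r. f r \<le> b"
  shows "a \<le> (\<Sum>r<R. 1 / real R * f r)" "(\<Sum>r<R. 1 / real R * f r) \<le> b"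
proof -
  have "(\<Sum>r<R. 1 / real R * a) \<le> (\<Sum>r<R. 1 / real R * f r)"
       "(\<Sum>r<R. 1 / real R * f r) \<le> (\<Sum>r<R. 1 / real R * b)"
    using assms by (intro sum_mono mult_left_mono; simp)+
  moreover have "(\<Sum>r<R. 1 / real R * c) = c" for c
    using assms(1) by simp
  ultimately show "a \<le> (\<Sum>r<R. 1 / real R * f r)" "(\<Sum>r<R. 1 / real R * f r) \<le> b"
    by simp_all
qed

text \<open>For \<open>R = 0\<close> the empirical mean is \<open>0\<close> and \<open>ln 0 = 0\<close>, so the bound holds for every \<open>R\<close>.\<close>
lemma abs_ln_empirical_mean_le:
  fixes f :: "nat \<Rightarrow> real"
  assumes "0 < a" "\<And>r. a \<le> f r" "\<And>r. f r \<le> b"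
  shows "\<bar>ln (\<Sum>r<R. 1 / real R * f r)\<bar> \<le> \<bar>ln a\<bar> + \<bar>ln b\<bar>"
proof (cases "R = 0")
  case False
  then have "a \<le> (\<Sum>r<R. 1 / real R * f r)" "(\<Sum>r<R. 1 / real R * f r) \<le> b"
    using empirical_mean_bounds[of R a f b] assms by auto
  then show ?thesis
    using assms(1) ln_le_cancel_iff[of a] ln_le_cancel_iff[of _ b] by (smt (verit))
qed simp

lemma (in prob_space) integral_bounded_le:
  fixes f :: "'a \<Rightarrow> real"
  assumes "f \<in> borel_measurable M" "\<And>x. \<bar>f x\<bar> \<le> b"
  shows "integrable M f" "\<bar>integral\<^sup>L M f\<bar> \<le> b"
proof -
  show int: "integrable M f" using assms by (intro integrable_const_bound[where B=b]) auto
  have "\<bar>integral\<^sup>L M f\<bar> \<le> (\<integral>x. b \<partial>M)"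
    using assms int by (intro integral_abs_bound[THEN order_trans] integral_mono) auto
  then show "\<bar>integral\<^sup>L M f\<bar> \<le> b" by (simp add: prob_space)
qed

lemma (in prob_space) integral_suminf_bounded:
  fixes f :: "nat \<Rightarrow> 'a \<Rightarrow> real"
  assumes [measurable]: "\<And>k. f k \<in> borel_measurable M"
    and f_le: "\<And>k x. \<bar>f k x\<bar> \<le> B k" and B: "summable B"
  shows "(\<integral>x. (\<Sum>k. f k x) \<partial>M) = (\<Sum>k. integral\<^sup>L M (f k))"
proof (rule integral_suminf)
  show "integrable M (f k)" for k
    by (rule integral_bounded_le(1)) (measurable, rule f_le)
  show "AE x in M. summable (\<lambda>k. norm (f k x))"
    using f_le by (intro AE_I2 summable_comparison_test'[OF B]) simp
  have "\<bar>\<integral>x. \<bar>f k x\<bar> \<partial>M\<bar> \<le> B k" for k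
    by (rule integral_bounded_le(2)) (measurable, simp add: f_le)
  then show "summable (\<lambda>k. \<integral>x. norm (f k x) \<partial>M)"
    by (intro summable_comparison_test'[OF B]) simp
qed

lemma (in prob_space) integral_abs_le_sqrt_second_moment:
  fixes X :: "'a \<Rightarrow> real"
  assumes "X \<in> borel_measurable M" "integrable M (\<lambda>x. (X x)\<^sup>2)"
  shows "(\<integral>x. \<bar>X x\<bar> \<partial>M) \<le> sqrt (\<integral>x. (X x)\<^sup>2 \<partial>M)"
proof -
  have "integrable M X" using assms square_integrable_imp_integrable by blast
  then have "integrable M (\<lambda>x. \<bar>X x\<bar>)" by simp
  then have "(\<integral>x. \<bar>X x\<bar> \<partial>M)\<^sup>2 \<le> (\<integral>x. (X x)\<^sup>2 \<partial>M)"
    using variance_positive[of "\<lambda>x. \<bar>X x\<bar>"] variance_eq[of "\<lambda>x. \<bar>X x\<bar>"] assms(2) by simp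
  then show ?thesis by (simp add: real_le_rsqrt)
qed

section \<open>Empirical means of i.i.d. samples\<close>

lemma product_prob_space_const: "prob_space W \<Longrightarrow> product_prob_space (\<lambda>_. W)"
  unfolding product_prob_space_def product_prob_space_axioms_def product_sigma_finite_def
  by (auto intro: prob_space_imp_sigma_finite)

lemma (in product_prob_space) integral_coordinates_mult:
  fixes f g :: "_ \<Rightarrow> real"
  assumes "r \<in> I" "s \<in> I" "r \<noteq> s" "integrable (M r) f" "integrable (M s) g"
  shows "(\<integral>\<omega>. f (\<omega> r) * g (\<omega> s) \<partial>PiM I M) = integral\<^sup>L (M r) f * integral\<^sup>L (M s) g"
proof -
  define h where "h i = (if i = r then f else g)" for i
  have J: "finite {r, s}" "{r, s} \<subseteq> I" using assms by auto
  have [measurable]: "f \<in> borel_measurable (M r)" "g \<in> borel_measurable (M s)" using assms by auto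
  have h_meas: "(\<lambda>x. \<Prod>i\<in>{r, s}. h i (x i)) \<in> borel_measurable (PiM {r, s} M)"
    using assms(3) by (simp add: h_def)
  have "(\<integral>\<omega>. f (\<omega> r) * g (\<omega> s) \<partial>PiM I M) = (\<integral>\<omega>. (\<Prod>i\<in>{r, s}. h i (restrict \<omega> {r, s} i)) \<partial>PiM I M)"
    using assms(3) by (simp add: h_def)
  also have "\<dots> = (\<integral>x. (\<Prod>i\<in>{r, s}. h i (x i)) \<partial>distr (PiM I M) (PiM {r, s} M) (\<lambda>\<omega>. restrict \<omega> {r, s}))"
    by (rule integral_distr[symmetric, OF measurable_restrict_subset[OF J(2)] h_meas])
  also have "\<dots> = (\<integral>x. (\<Prod>i\<in>{r, s}. h i (x i)) \<partial>PiM {r, s} M)"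
    using distr_PiM_restrict_finite[OF J] by simp
  also have "\<dots> = (\<Prod>i\<in>{r, s}. integral\<^sup>L (M i) (h i))"
    by (rule product_integral_prod) (use assms in \<open>auto simp: h_def\<close>)
  finally show ?thesis using assms(3) by (simp add: h_def)
qed

lemma second_moment_sum_iid_centered:
  fixes h :: "'a \<Rightarrow> real"
  assumes W: "prob_space W" and [measurable]: "h \<in> borel_measurable W"
    and h_le: "\<And>x. \<bar>h x\<bar> \<le> b" and centered: "integral\<^sup>L W h = 0"
  shows "(\<integral>\<omega>. (\<Sum>r<R. h (\<omega> r))\<^sup>2 \<partial>PiM UNIV (\<lambda>_. W)) \<le> real R * b\<^sup>2"
proof -
  have h_int: "integrable W h"
    using prob_space.integral_bounded_le(1)[OF W, of h b] h_le by simp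
  interpret product_prob_space "\<lambda>_::nat. W" UNIV by (rule product_prob_space_const[OF W])
  have hh_le: "\<bar>h (\<omega> r) * h (\<omega> s)\<bar> \<le> b\<^sup>2" for \<omega> :: "nat \<Rightarrow> 'a" and r s
    unfolding abs_mult power2_eq_square using h_le
    by (intro mult_mono) (auto intro: order_trans[OF abs_ge_zero])
  have int: "integrable (PiM UNIV (\<lambda>_. W)) (\<lambda>\<omega>. h (\<omega> r) * h (\<omega> s))" for r s :: nat
    by (rule P.integral_bounded_le(1)) (measurable, rule hh_le)
  have diag: "(\<integral>\<omega>. h (\<omega> r) * h (\<omega> r) \<partial>PiM UNIV (\<lambda>_. W)) \<le> b\<^sup>2" for r :: nat
  proof -
    have "\<bar>\<integral>\<omega>. h (\<omega> r) * h (\<omega> r) \<partial>PiM UNIV (\<lambda>_. W)\<bar> \<le> b\<^sup>2"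
      by (rule P.integral_bounded_le(2)) (measurable, rule hh_le)
    then show ?thesis by simp
  qed
  have off_diag: "(\<integral>\<omega>. h (\<omega> r) * h (\<omega> s) \<partial>PiM UNIV (\<lambda>_. W)) = 0" if "r \<noteq> s" for r s :: nat
    using integral_coordinates_mult[of r s h h] that h_int centered by simp
  have "(\<integral>\<omega>. (\<Sum>r<R. h (\<omega> r))\<^sup>2 \<partial>PiM UNIV (\<lambda>_. W))
      = (\<Sum>r<R. \<Sum>s<R. \<integral>\<omega>. h (\<omega> r) * h (\<omega> s) \<partial>PiM UNIV (\<lambda>_. W))"
    by (simp add: power2_eq_square sum_product int Bochner_Integration.integral_sum
        Bochner_Integration.integrable_sum)
  also have "\<dots> = (\<Sum>r<R. \<integral>\<omega>. h (\<omega> r) * h (\<omega> r) \<partial>PiM UNIV (\<lambda>_. W))"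
  proof (rule sum.cong[OF refl])
    fix r assume "r \<in> {..<R}"
    then show "(\<Sum>s<R. \<integral>\<omega>. h (\<omega> r) * h (\<omega> s) \<partial>PiM UNIV (\<lambda>_. W))
        = (\<integral>\<omega>. h (\<omega> r) * h (\<omega> r) \<partial>PiM UNIV (\<lambda>_. W))"
      by (subst sum.remove[where x=r]) (auto simp: off_diag)
  qed
  also have "\<dots> \<le> real R * b\<^sup>2"
    using sum_mono[of "{..<R}", OF diag] by simp
  finally show ?thesis .
qed

lemma integral_abs_sum_iid_centered_le:
  fixes h :: "'a \<Rightarrow> real" and R :: nat
  assumes W: "prob_space W" and [measurable]: "h \<in> borel_measurable W"
    and h_le: "\<And>x. \<bar>h x\<bar> \<le> b" and centered: "integral\<^sup>L W h = 0"
  shows "(\<integral>\<omega>. \<bar>\<Sum>r<R. h (\<omega> r)\<bar> \<partial>PiM UNIV (\<lambda>_. W)) \<le> sqrt R * b"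
proof -
  interpret product_prob_space "\<lambda>_::nat. W" UNIV by (rule product_prob_space_const[OF W])
  have b0: "0 \<le> b" using h_le[of undefined] by linarith
  have "\<bar>\<Sum>r<R. h (\<omega> r)\<bar> \<le> real R * b" for \<omega>
    using order_trans[OF sum_abs sum_mono[of "{..<R}" "\<lambda>r. \<bar>h (\<omega> r)\<bar>" "\<lambda>_. b"]] h_le by simp
  then have "\<bar>(\<Sum>r<R. h (\<omega> r))\<^sup>2\<bar> \<le> (real R * b)\<^sup>2" for \<omega>
    using b0 by (simp add: abs_le_square_iff[symmetric])
  then have "integrable (PiM UNIV (\<lambda>_. W)) (\<lambda>\<omega>. (\<Sum>r<R. h (\<omega> r))\<^sup>2)"
    by (intro P.integral_bounded_le(1)[where b="(real R * b)\<^sup>2"]) measurable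
  then have "(\<integral>\<omega>. \<bar>\<Sum>r<R. h (\<omega> r)\<bar> \<partial>PiM UNIV (\<lambda>_. W))
      \<le> sqrt (\<integral>\<omega>. (\<Sum>r<R. h (\<omega> r))\<^sup>2 \<partial>PiM UNIV (\<lambda>_. W))"
    by (rule P.integral_abs_le_sqrt_second_moment[rotated]) measurable
  also have "\<dots> \<le> sqrt (real R * b\<^sup>2)"
    by (rule real_sqrt_le_mono, rule second_moment_sum_iid_centered[OF W _ h_le centered]) measurable
  also have "\<dots> = sqrt R * b"
    using b0 by (simp add: real_sqrt_mult)
  finally show ?thesis .
qed

lemma empirical_mean_L1_le:
  fixes g :: "'a \<Rightarrow> real"
  assumes W: "prob_space W" and [measurable]: "g \<in> borel_measurable W"
    and g_le: "\<And>x. \<bar>g x\<bar> \<le> b" and "0 < R"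
  shows "(\<integral>\<omega>. \<bar>(\<Sum>r<R. 1 / real R * g (\<omega> r)) - integral\<^sup>L W g\<bar> \<partial>PiM UNIV (\<lambda>_. W))
    \<le> 2 * b / sqrt R"
proof -
  interpret prob_space W by (rule W)
  define h where "h x = g x - integral\<^sup>L W g" for x
  have g_int: "integrable W g" and "\<bar>integral\<^sup>L W g\<bar> \<le> b"
    using integral_bounded_le[of g b] g_le by auto
  then have h_le: "\<bar>h x\<bar> \<le> 2 * b" for x
    using g_le[of x] by (simp add: h_def)
  have "integral\<^sup>L W h = 0"
    unfolding h_def using g_int by (simp add: prob_space)
  then have "(\<integral>\<omega>. \<bar>\<Sum>r<R. h (\<omega> r)\<bar> \<partial>PiM UNIV (\<lambda>_. W)) \<le> sqrt R * (2 * b)"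
    by (intro integral_abs_sum_iid_centered_le[OF W _ h_le]) (simp add: h_def)
  then have "(\<integral>\<omega>. \<bar>\<Sum>r<R. h (\<omega> r)\<bar> \<partial>PiM UNIV (\<lambda>_. W)) / R \<le> sqrt R * (2 * b) / R"
    by (simp add: divide_right_mono)
  also have "\<dots> = 2 * b / sqrt R"
    using \<open>0 < R\<close> by (simp add: sqrt_divide_self_eq field_split_simps)
  moreover have "(\<Sum>r<R. 1 / real R * g (\<omega> r)) - integral\<^sup>L W g = (\<Sum>r<R. h (\<omega> r)) / R" for \<omega>
    using \<open>0 < R\<close> by (simp add: h_def sum_subtractf sum_divide_distrib[symmetric] diff_divide_distrib)
  ultimately show ?thesis by simp
qed

lemma integral_ln_empirical_mean_diff_le:
  fixes \<gamma> :: "'a \<Rightarrow> real"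
  assumes W: "prob_space W" and [measurable]: "\<gamma> \<in> borel_measurable W"
    and a: "0 < a" and \<gamma>_ge: "\<And>x. a \<le> \<gamma> x" and \<gamma>_le: "\<And>x. \<gamma> x \<le> b" and R: "0 < R"
  shows "\<bar>(\<integral>\<omega>. ln (\<Sum>r<R. 1 / real R * \<gamma> (\<omega> r)) \<partial>PiM UNIV (\<lambda>_. W)) - ln (integral\<^sup>L W \<gamma>)\<bar>
    \<le> 2 * b / a / sqrt R"
proof -
  define \<mu> where "\<mu> = integral\<^sup>L W \<gamma>"
  define m where "m \<omega> = (\<Sum>r<R. 1 / real R * \<gamma> (\<omega> r))" for \<omega> :: "nat \<Rightarrow> 'a"
  have \<gamma>_abs: "\<bar>\<gamma> x\<bar> \<le> b" for x using a \<gamma>_ge[of x] \<gamma>_le[of x] by linarith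
  have \<gamma>_int: "integrable W \<gamma>" using prob_space.integral_bounded_le(1)[OF W, of \<gamma> b] \<gamma>_abs by simp
  have \<mu>: "a \<le> \<mu>" "\<mu> \<le> b" unfolding \<mu>_def
    by (intro prob_space.integral_ge_const[OF W \<gamma>_int] prob_space.integral_le_const[OF W \<gamma>_int]
        AE_I2 \<gamma>_ge \<gamma>_le)+
  interpret product_prob_space "\<lambda>_::nat. W" UNIV by (rule product_prob_space_const[OF W])
  have [measurable]: "m \<in> borel_measurable (PiM UNIV (\<lambda>_. W))"
    unfolding m_def by measurable
  have m: "a \<le> m \<omega>" "m \<omega> \<le> b" for \<omega>
    unfolding m_def using empirical_mean_bounds[OF R \<gamma>_ge \<gamma>_le] by auto
  have ln_int: "integrable (PiM UNIV (\<lambda>_. W)) (\<lambda>\<omega>. ln (m \<omega>))"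
    by (rule P.integral_bounded_le(1)[where b="\<bar>ln a\<bar> + \<bar>ln b\<bar>"])
      (measurable, unfold m_def, rule abs_ln_empirical_mean_le[OF a \<gamma>_ge \<gamma>_le])
  have "\<bar>m \<omega> - \<mu>\<bar> \<le> 2 * b" for \<omega> using m[of \<omega>] \<mu> a by linarith
  then have diff_int: "integrable (PiM UNIV (\<lambda>_. W)) (\<lambda>\<omega>. \<bar>m \<omega> - \<mu>\<bar> / a)"
    by (intro P.integral_bounded_le(1)[where b="2 * b / a"])
      (measurable, use a in \<open>auto intro: divide_right_mono\<close>)
  have "\<bar>(\<integral>\<omega>. ln (m \<omega>) \<partial>PiM UNIV (\<lambda>_. W)) - ln \<mu>\<bar> = \<bar>\<integral>\<omega>. ln (m \<omega>) - ln \<mu> \<partial>PiM UNIV (\<lambda>_. W)\<bar>"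
    using ln_int by (simp add: P.prob_space)
  also have "\<dots> \<le> (\<integral>\<omega>. \<bar>m \<omega> - \<mu>\<bar> / a \<partial>PiM UNIV (\<lambda>_. W))"
    using ln_int diff_int
    by (intro integral_abs_bound[THEN order_trans] integral_mono ln_diff_le_div a m \<mu>) auto
  also have "\<dots> \<le> (2 * b / sqrt R) / a"
  proof -
    have "(\<integral>\<omega>. \<bar>m \<omega> - \<mu>\<bar> \<partial>PiM UNIV (\<lambda>_. W)) \<le> 2 * b / sqrt R"
      unfolding m_def \<mu>_def by (rule empirical_mean_L1_le[OF W _ \<gamma>_abs R]) measurable
    from divide_right_mono[OF this, of a] a show ?thesis by simp
  qed
  finally show ?thesis unfolding m_def \<mu>_def by (simp add: divide_divide_eq_left mult.commute)
qed

lemma integral_ln_empirical_mean_tendsto: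
  fixes \<gamma> :: "'a \<Rightarrow> real"
  assumes W: "prob_space W" and \<gamma>: "\<gamma> \<in> borel_measurable W"
    and a: "0 < a" and \<gamma>_ge: "\<And>x. a \<le> \<gamma> x" and \<gamma>_le: "\<And>x. \<gamma> x \<le> b"
  shows "(\<lambda>R. \<integral>\<omega>. ln (\<Sum>r<R. 1 / real R * \<gamma> (\<omega> r)) \<partial>PiM UNIV (\<lambda>_. W)) \<longlonglongrightarrow> ln (integral\<^sup>L W \<gamma>)"
proof -
  have "(\<lambda>R. 2 * b / a / sqrt (real R)) \<longlonglongrightarrow> 0"
    by (intro tendsto_divide_0[OF tendsto_const] filterlim_at_top_imp_at_infinity
        filterlim_compose[OF sqrt_at_top filterlim_real_sequentially])
  moreover have "\<forall>\<^sub>F R in sequentially.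
      norm ((\<integral>\<omega>. ln (\<Sum>r<R. 1 / real R * \<gamma> (\<omega> r)) \<partial>PiM UNIV (\<lambda>_. W)) - ln (integral\<^sup>L W \<gamma>))
        \<le> 2 * b / a / sqrt (real R)"
    using integral_ln_empirical_mean_diff_le[OF W \<gamma> a \<gamma>_ge \<gamma>_le]
    by (intro eventually_sequentiallyI[of 1]) simp
  ultimately show ?thesis
    by (subst LIM_zero_iff[symmetric]) (rule Lim_null_comparison[rotated])
qed

section \<open>Sampling columns with weights \<open>\<xi>\<close>\<close>

lemma Delta1_iff:
  "xi \<in> Delta1 \<longleftrightarrow>
    (\<forall>n. 0 \<le> xi n \<and> xi n \<le> 1) \<and> (\<forall>n. xi (Suc n) \<le> xi n) \<and> (\<Sum>n. ennreal (xi n)) = 1"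
proof
  assume "xi \<in> Delta1"
  then have xi: "\<forall>n. 0 \<le> xi n \<and> xi n \<le> 1" "\<forall>n. xi (Suc n) \<le> xi n" "summable xi" "suminf xi = 1"
    by (auto simp: Delta1_def Delta_def)
  then have "(\<Sum>n. ennreal (xi n)) = ennreal (suminf xi)" by (intro suminf_ennreal2) auto
  with xi show "(\<forall>n. 0 \<le> xi n \<and> xi n \<le> 1) \<and> (\<forall>n. xi (Suc n) \<le> xi n) \<and> (\<Sum>n. ennreal (xi n)) = 1"
    by simp
next
  assume xi: "(\<forall>n. 0 \<le> xi n \<and> xi n \<le> 1) \<and> (\<forall>n. xi (Suc n) \<le> xi n) \<and> (\<Sum>n. ennreal (xi n)) = 1"
  then have summable: "summable xi" by (intro summable_suminf_not_top) auto
  then have "(\<Sum>n. ennreal (xi n)) = ennreal (suminf xi)" using xi by (intro suminf_ennreal2) auto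
  with xi have "suminf xi = 1" using suminf_nonneg[OF summable] by (metis ennreal_eq_1)
  with xi summable show "xi \<in> Delta1" by (auto simp: Delta1_def Delta_def)
qed

lemma Delta1D: "xi \<in> Delta1 \<Longrightarrow> 0 \<le> xi n" "xi \<in> Delta1 \<Longrightarrow> summable xi"
  by (auto simp: Delta1_def Delta_def)

lemma measurable_weight [measurable]: "(\<lambda>xi. xi \<alpha>) \<in> borel_measurable Mxi"
  unfolding Mxi_def by (rule measurable_component_singleton) simp

lemma pred_Delta1 [measurable]: "Measurable.pred Mxi (\<lambda>xi. xi \<in> Delta1)"
proof -
  have [measurable]: "Measurable.pred Mxi (\<lambda>xi. xi (Suc n) \<le> xi n)" for n
    unfolding pred_def by (rule borel_measurable_le) measurable
  have "(\<lambda>xi. \<Sum>n. ennreal (xi n)) \<in> borel_measurable Mxi" by measurable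
  then have [measurable]: "Measurable.pred Mxi (\<lambda>xi. (\<Sum>n. ennreal (xi n)) = 1)"
    by (rule pred_eq_const1) (simp add: borel_closed)
  show ?thesis unfolding Delta1_iff by measurable
qed

lemma sets_wmeas [simp]: "sets (wmeas xi) = sets (count_space UNIV)"
  by (simp add: wmeas_def)

lemma space_wmeas [simp]: "space (wmeas xi) = UNIV"
  by (simp add: wmeas_def)

lemma measurable_wmeas [simp]: "measurable (wmeas xi) N = measurable (count_space UNIV) N"
  by (rule measurable_cong_sets) auto

lemma prob_space_wmeas: "xi \<in> Delta1 \<Longrightarrow> prob_space (wmeas xi)"
  by (rule prob_spaceI)
    (simp add: wmeas_def emeasure_density nn_integral_count_space_nat Delta1_iff)

lemma integral_wmeas:
  fixes f :: "nat \<Rightarrow> real"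
  assumes xi: "xi \<in> Delta1" and f_le: "\<And>n. \<bar>f n\<bar> \<le> B"
  shows "integral\<^sup>L (wmeas xi) f = (\<Sum>n. xi n * f n)"
proof -
  have "integral\<^sup>L (wmeas xi) f = integral\<^sup>L (count_space UNIV) (\<lambda>n. xi n * f n)"
    unfolding wmeas_def using Delta1D(1)[OF xi] by (subst integral_density) auto
  also have "\<dots> = (\<Sum>n. xi n * f n)"
  proof (rule integral_count_space_nat)
    have "norm (norm (xi n * f n)) \<le> xi n * B" for n
      using f_le[of n] Delta1D(1)[OF xi, of n] by (simp add: abs_mult mult_left_mono)
    then have "summable (\<lambda>n. norm (xi n * f n))"
      by (rule summable_comparison_test'[OF summable_mult2[OF Delta1D(2)[OF xi]]])
    then show "integrable (count_space UNIV) (\<lambda>n. xi n * f n)"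
      by (simp add: integrable_count_space_nat_iff)
  qed
  finally show ?thesis .
qed

definition Mtau :: "nat \<Rightarrow> (nat \<Rightarrow> nat) measure" where
  "Mtau q = PiM UNIV (\<lambda>_. count_space {1..q})"

lemma MT_eq_PiM_Mtau: "MT q = PiM UNIV (\<lambda>_. Mtau q)"
  by (simp add: MT_def Mtau_def)

lemma space_Mtau: "space (Mtau q) = {\<tau>. \<forall>n. \<tau> n \<in> {1..q}}"
  by (auto simp: Mtau_def space_PiM PiE_def Pi_def)

lemma space_MT: "space (MT q) = {T. \<forall>\<alpha>. T \<alpha> \<in> space (Mtau q)}"
  by (auto simp: MT_eq_PiM_Mtau space_PiM PiE_def Pi_def)

lemma measurable_column [measurable]: "(\<lambda>T. T \<alpha>) \<in> measurable (MT q) (Mtau q)"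
  unfolding MT_eq_PiM_Mtau by (rule measurable_component_singleton) simp

lemma measurable_tau_component [measurable]: "(\<lambda>\<tau>. \<tau> i) \<in> measurable (Mtau q) (count_space UNIV)"
  unfolding Mtau_def by (rule measurable_compose[OF measurable_component_singleton]) auto

definition sample_kernel ::
    "nat \<Rightarrow> (nat \<Rightarrow> real) \<times> (nat \<Rightarrow> nat \<Rightarrow> nat) \<Rightarrow> (nat \<Rightarrow> nat \<Rightarrow> nat) measure" where
  "sample_kernel q = (\<lambda>(xi, T).
      if xi \<in> Delta1 then distr (PiM UNIV (\<lambda>_. wmeas xi)) (MT q) (\<lambda>r j. T (r j))
      else return (MT q) (\<lambda>_ _. 1))"

lemma frakL_eq_bind_sample_kernel: "frakL q L = bind L (sample_kernel q)"
  by (simp add: frakL_def sample_kernel_def)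

lemma sets_sample_kernel: "sets (sample_kernel q x) = sets (MT q)"
  by (cases x) (simp add: sample_kernel_def)

lemma measurable_sample:
  assumes "T \<in> space (MT q)"
  shows "(\<lambda>r j. T (r j)) \<in> measurable (PiM UNIV (\<lambda>_. wmeas xi)) (MT q)"
  unfolding MT_eq_PiM_Mtau
proof (rule measurable_PiM_single')
  show "(\<lambda>r. T (r j)) \<in> measurable (PiM UNIV (\<lambda>_. wmeas xi)) (Mtau q)" for j
    using assms
    by (intro measurable_compose[OF measurable_component_singleton[of j]]) (auto simp: space_MT)
  show "(\<lambda>r j. T (r j)) \<in> space (PiM UNIV (\<lambda>_. wmeas xi)) \<rightarrow> (\<Pi>\<^sub>E i\<in>UNIV. space (Mtau q))"
    using assms by (auto simp: space_MT)
qed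

lemma prob_space_sample_kernel:
  assumes "1 \<le> q" "x \<in> space (Mxi \<Otimes>\<^sub>M MT q)"
  shows "prob_space (sample_kernel q x)"
proof -
  obtain xi T where x: "x = (xi, T)" and T: "T \<in> space (MT q)"
    using assms(2) by (cases x) (simp add: space_pair_measure)
  show ?thesis
  proof (cases "xi \<in> Delta1")
    case True
    interpret product_prob_space "\<lambda>_::nat. wmeas xi" UNIV
      by (rule product_prob_space_const[OF prob_space_wmeas[OF True]])
    show ?thesis using True by (simp add: x sample_kernel_def P.prob_space_distr measurable_sample[OF T])
  next
    case False
    with assms(1) show ?thesis
      by (simp add: x sample_kernel_def prob_space_return space_MT space_Mtau)
  qed
qed

lemma integral_sample_kernel:
  fixes f :: "(nat \<Rightarrow> nat \<Rightarrow> nat) \<Rightarrow> real"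
  assumes "xi \<in> Delta1" "T \<in> space (MT q)" "f \<in> borel_measurable (MT q)"
  shows "(\<integral>T'. f T' \<partial>sample_kernel q (xi, T)) = (\<integral>\<rho>. f (\<lambda>j. T (\<rho> j)) \<partial>PiM UNIV (\<lambda>_. wmeas xi))"
  using assms by (simp add: sample_kernel_def integral_distr[OF measurable_sample[OF assms(2)] assms(3)])

lemma emeasure_sample_kernel_cylinder:
  assumes T: "T \<in> space (MT q)" and xi: "xi \<in> Delta1" and J: "finite J"
    and X: "\<And>j. j \<in> J \<Longrightarrow> X j \<in> sets (Mtau q)"
  shows "emeasure (sample_kernel q (xi, T)) (prod_emb UNIV (\<lambda>_. Mtau q) J (Pi\<^sub>E J X))
    = (\<Prod>j\<in>J. \<Sum>\<alpha>. ennreal (xi \<alpha>) * indicator (X j) (T \<alpha>))"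
proof -
  interpret product_prob_space "\<lambda>_::nat. wmeas xi" UNIV
    by (rule product_prob_space_const[OF prob_space_wmeas[OF xi]])
  have A: "prod_emb UNIV (\<lambda>_. Mtau q) J (Pi\<^sub>E J X) \<in> sets (MT q)"
    unfolding MT_eq_PiM_Mtau using J X by (intro sets_PiM_I) auto
  have "(\<lambda>r j. T (r j)) -` prod_emb UNIV (\<lambda>_. Mtau q) J (Pi\<^sub>E J X) \<inter> space (PiM UNIV (\<lambda>_. wmeas xi))
      = {\<rho> \<in> space (PiM UNIV (\<lambda>_. wmeas xi)). \<forall>j\<in>J. \<rho> j \<in> {\<alpha>. T \<alpha> \<in> X j}}"
    using T by (auto simp: prod_emb_def space_MT PiE_iff space_PiM)
  then have "emeasure (sample_kernel q (xi, T)) (prod_emb UNIV (\<lambda>_. Mtau q) J (Pi\<^sub>E J X))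
      = emeasure (PiM UNIV (\<lambda>_. wmeas xi))
          {\<rho> \<in> space (PiM UNIV (\<lambda>_. wmeas xi)). \<forall>j\<in>J. \<rho> j \<in> {\<alpha>. T \<alpha> \<in> X j}}"
    using xi by (simp add: sample_kernel_def emeasure_distr[OF measurable_sample[OF T] A])
  also have "\<dots> = (\<Prod>j\<in>J. emeasure (wmeas xi) {\<alpha>. T \<alpha> \<in> X j})"
    using J by (intro emeasure_PiM_Collect) auto
  also have "\<dots> = (\<Prod>j\<in>J. \<Sum>\<alpha>. ennreal (xi \<alpha>) * indicator (X j) (T \<alpha>))"
    unfolding wmeas_def
    by (intro prod.cong refl, subst emeasure_density)
      (auto simp: nn_integral_count_space_nat indicator_def)
  finally show ?thesis .
qed

lemma measurable_cylinder_weight: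
  assumes "\<And>j. j \<in> J \<Longrightarrow> X j \<in> sets (Mtau q)"
  shows "(\<lambda>x. \<Prod>j\<in>J. \<Sum>\<alpha>. ennreal (fst x \<alpha>) * indicator (X j) (snd x \<alpha>))
    \<in> borel_measurable (Mxi \<Otimes>\<^sub>M MT q)"
proof (intro borel_measurable_prod_ennreal borel_measurable_suminf_order borel_measurable_times_ennreal)
  fix j \<alpha> assume "j \<in> J"
  show "(\<lambda>x. indicator (X j) (snd x \<alpha>) :: ennreal) \<in> borel_measurable (Mxi \<Otimes>\<^sub>M MT q)"
    by (rule measurable_compose[OF _ borel_measurable_indicator[OF assms[OF \<open>j \<in> J\<close>]]]) measurable
qed measurable

lemma measurable_sample_kernel:
  assumes q: "1 \<le> q"
  shows "sample_kernel q \<in> measurable (Mxi \<Otimes>\<^sub>M MT q) (subprob_algebra (MT q))"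
proof (rule measurable_prob_algebraD, rule measurable_prob_algebra_generated)
  show "sets (MT q) = sigma_sets (\<Pi>\<^sub>E i\<in>UNIV. space (Mtau q)) (prod_algebra UNIV (\<lambda>_. Mtau q))"
    unfolding MT_eq_PiM_Mtau by (rule sets_PiM)
  show "Int_stable (prod_algebra UNIV (\<lambda>_. Mtau q))" by (rule Int_stable_prod_algebra)
  show "prod_algebra UNIV (\<lambda>_. Mtau q) \<subseteq> Pow (\<Pi>\<^sub>E i\<in>UNIV. space (Mtau q))"
    by (rule prod_algebra_sets_into_space)
  show "x \<in> space (Mxi \<Otimes>\<^sub>M MT q) \<Longrightarrow> prob_space (sample_kernel q x)" for x
    by (rule prob_space_sample_kernel[OF q])
  show "sets (sample_kernel q x) = sets (MT q)" for x
    by (rule sets_sample_kernel)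
  fix A :: "(nat \<Rightarrow> nat \<Rightarrow> nat) set" assume "A \<in> prod_algebra UNIV (\<lambda>_. Mtau q)"
  then obtain J X where A: "A = prod_emb UNIV (\<lambda>_. Mtau q) J (Pi\<^sub>E J X)" and J: "finite J"
    and X: "\<And>j. j \<in> J \<Longrightarrow> X j \<in> sets (Mtau q)"
    by (auto elim!: prod_algebraE)
  define E where "E x = (if fst x \<in> Delta1
      then \<Prod>j\<in>J. \<Sum>\<alpha>. ennreal (fst x \<alpha>) * indicator (X j) (snd x \<alpha>)
      else indicator A (\<lambda>_ _. 1::nat))" for x :: "(nat \<Rightarrow> real) \<times> (nat \<Rightarrow> nat \<Rightarrow> nat)"
  have "Measurable.pred (Mxi \<Otimes>\<^sub>M MT q) (\<lambda>x. fst x \<in> Delta1)" by measurable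
  then have "E \<in> borel_measurable (Mxi \<Otimes>\<^sub>M MT q)"
    unfolding E_def by (intro measurable_If measurable_cylinder_weight X) (auto simp: pred_def)
  moreover have "emeasure (sample_kernel q x) A = E x" if x_space: "x \<in> space (Mxi \<Otimes>\<^sub>M MT q)" for x
  proof -
    obtain xi T where x: "x = (xi, T)" and T: "T \<in> space (MT q)"
      using x_space by (cases x) (simp add: space_pair_measure)
    have "A \<in> sets (MT q)" unfolding A MT_eq_PiM_Mtau using J X by (intro sets_PiM_I) auto
    then show ?thesis
      using emeasure_sample_kernel_cylinder[OF T _ J X] by (simp add: A E_def x sample_kernel_def)
  qed
  ultimately show "(\<lambda>x. emeasure (sample_kernel q x) A) \<in> borel_measurable (Mxi \<Otimes>\<^sub>M MT q)"
    by (subst measurable_cong) auto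
qed

lemma S_lawsD:
  assumes "L \<in> S_laws q"
  shows "prob_space L" and sets_S_laws: "sets L = sets (Mxi \<Otimes>\<^sub>M MT q)"
    and "AE x in L. fst x \<in> Delta1"
proof -
  show L: "prob_space L" "sets L = sets (Mxi \<Otimes>\<^sub>M MT q)"
    using assms by (auto simp: S_laws_def)
  interpret prob_space L by (rule L(1))
  have "Measurable.pred (Mxi \<Otimes>\<^sub>M MT q) (\<lambda>x. fst x \<in> Delta1)" by measurable
  then have "{x \<in> space L. fst x \<in> Delta1} \<in> sets L"
    using L(2) sets_eq_imp_space_eq[OF L(2)] by (simp add: pred_def)
  moreover have "emeasure L {x \<in> space L. fst x \<in> Delta1} = 1"
    using assms by (simp add: S_laws_def)
  ultimately have "AE x in L. x \<in> {x \<in> space L. fst x \<in> Delta1}"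
    by (intro AE_prob_1) (simp add: emeasure_eq_measure)
  then show "AE x in L. fst x \<in> Delta1" by auto
qed

lemma integral_frakL:
  fixes f :: "(nat \<Rightarrow> nat \<Rightarrow> nat) \<Rightarrow> real"
  assumes q: "1 \<le> q" and L: "L \<in> S_laws q"
    and f: "f \<in> borel_measurable (MT q)" and f_le: "\<And>T. \<bar>f T\<bar> \<le> C"
  shows "(\<integral>T. f T \<partial>frakL q L) = (\<integral>x. (\<integral>T. f T \<partial>sample_kernel q x) \<partial>L)"
  unfolding frakL_eq_bind_sample_kernel
proof (rule integral_bind[OF f])
  interpret prob_space L by (rule S_lawsD(1)[OF L])
  show "sample_kernel q \<in> measurable L (subprob_algebra (MT q))"
    using measurable_sample_kernel[OF q] by (simp add: measurable_cong_sets[OF sets_S_laws[OF L] refl])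
  show "finite_measure L" by (rule finite_measure_axioms)
  show "AE x in L. emeasure (sample_kernel q x) (space (sample_kernel q x)) \<le> ennreal 1"
    using prob_space_sample_kernel[OF q] sets_eq_imp_space_eq[OF sets_S_laws[OF L]]
    by (auto intro!: AE_I2 simp: prob_space.emeasure_space_1)
qed (use f_le in auto)

lemma frakL_integral_tendsto:
  fixes f :: "nat \<Rightarrow> (nat \<Rightarrow> nat \<Rightarrow> nat) \<Rightarrow> real"
    and F :: "(nat \<Rightarrow> real) \<times> (nat \<Rightarrow> nat \<Rightarrow> nat) \<Rightarrow> real"
  assumes q: "1 \<le> q" and L: "L \<in> S_laws q"
    and f: "\<And>R. f R \<in> borel_measurable (MT q)" and f_le: "\<And>R T. \<bar>f R T\<bar> \<le> C"
    and F: "F \<in> borel_measurable (Mxi \<Otimes>\<^sub>M MT q)"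
    and lim: "\<And>xi T. xi \<in> Delta1 \<Longrightarrow> T \<in> space (MT q) \<Longrightarrow>
       (\<lambda>R. \<integral>\<rho>. f R (\<lambda>j. T (\<rho> j)) \<partial>PiM UNIV (\<lambda>_. wmeas xi)) \<longlonglongrightarrow> F (xi, T)"
  shows "(\<lambda>R. \<integral>T. f R T \<partial>frakL q L) \<longlonglongrightarrow> (\<integral>x. F x \<partial>L)"
  unfolding integral_frakL[OF q L f f_le]
proof (rule integral_dominated_convergence[where w="\<lambda>_. C"])
  interpret prob_space L by (rule S_lawsD(1)[OF L])
  note space_L = sets_eq_imp_space_eq[OF sets_S_laws[OF L]]
  show "F \<in> borel_measurable L"
    using F by (simp add: measurable_cong_sets[OF sets_S_laws[OF L] refl])
  show "(\<lambda>x. \<integral>T. f R T \<partial>sample_kernel q x) \<in> borel_measurable L" for R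
    using measurable_compose[OF measurable_sample_kernel[OF q] integral_measurable_subprob_algebra[OF f]]
    by (simp add: measurable_cong_sets[OF sets_S_laws[OF L] refl])
  show "integrable L (\<lambda>_. C)" by simp
  show "AE x in L. norm (\<integral>T. f R T \<partial>sample_kernel q x) \<le> C" for R
  proof (rule AE_I2)
    fix x assume "x \<in> space L"
    then interpret K: prob_space "sample_kernel q x"
      using prob_space_sample_kernel[OF q] space_L by simp
    show "norm (\<integral>T. f R T \<partial>sample_kernel q x) \<le> C"
      using K.integral_bounded_le(2)[OF _ f_le] f[of R]
      by (simp add: measurable_cong_sets[OF sets_sample_kernel refl])
  qed
  show "AE x in L. (\<lambda>R. \<integral>T. f R T \<partial>sample_kernel q x) \<longlonglongrightarrow> F x"
    using S_lawsD(3)[OF L]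
  proof (rule AE_mp, intro AE_I2 impI)
    fix x assume "x \<in> space L" "fst x \<in> Delta1"
    then obtain xi T where x: "x = (xi, T)" and xi: "xi \<in> Delta1" and T: "T \<in> space (MT q)"
      using space_L by (cases x) (auto simp: space_pair_measure)
    show "(\<lambda>R. \<integral>T. f R T \<partial>sample_kernel q x) \<longlonglongrightarrow> F x"
      using lim[OF xi T] by (simp add: x integral_sample_kernel[OF xi T f])
  qed
qed

section \<open>Series of logarithms of empirical means\<close>

text \<open>Both functionals are series \<open>\<Sum>k. \<Sum>j\<in>J k. u k j * ln (x k j)\<close> with \<open>x k j \<in> [a k, b]\<close>:
  for \<open>G1\<close> the index \<open>j\<close> is the site tuple \<open>I\<close> of length \<open>k\<close>, for \<open>G2\<close> it is trivial.\<close>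

locale weighted_log_series =
  fixes J :: "nat \<Rightarrow> 'j set" and u :: "nat \<Rightarrow> 'j \<Rightarrow> real" and a :: "nat \<Rightarrow> real" and b :: real
  assumes u_nonneg: "\<And>k j. 0 \<le> u k j"
    and a_pos: "\<And>k. 0 < a k"
    and summable_weights: "summable (\<lambda>k. (\<Sum>j\<in>J k. u k j) * (\<bar>ln (a k)\<bar> + \<bar>ln b\<bar>))"
begin

definition bound :: real where
  "bound = (\<Sum>k. (\<Sum>j\<in>J k. u k j) * (\<bar>ln (a k)\<bar> + \<bar>ln b\<bar>))"

lemma abs_log_term_le:
  assumes "\<And>j. \<bar>ln (x j)\<bar> \<le> \<bar>ln (a k)\<bar> + \<bar>ln b\<bar>"
  shows "\<bar>\<Sum>j\<in>J k. u k j * ln (x j)\<bar> \<le> (\<Sum>j\<in>J k. u k j) * (\<bar>ln (a k)\<bar> + \<bar>ln b\<bar>)"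
proof -
  have "\<bar>\<Sum>j\<in>J k. u k j * ln (x j)\<bar> \<le> (\<Sum>j\<in>J k. u k j * (\<bar>ln (a k)\<bar> + \<bar>ln b\<bar>))"
    using assms u_nonneg
    by (intro sum_abs[THEN order_trans] sum_mono) (simp add: abs_mult mult_left_mono)
  then show ?thesis by (simp add: sum_distrib_right)
qed

lemma abs_log_series_le_bound:
  assumes "\<And>k j. \<bar>ln (x k j)\<bar> \<le> \<bar>ln (a k)\<bar> + \<bar>ln b\<bar>"
  shows "\<bar>\<Sum>k. \<Sum>j\<in>J k. u k j * ln (x k j)\<bar> \<le> bound"
proof -
  have term_le: "\<bar>\<Sum>j\<in>J k. u k j * ln (x k j)\<bar> \<le> (\<Sum>j\<in>J k. u k j) * (\<bar>ln (a k)\<bar> + \<bar>ln b\<bar>)"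
    for k by (rule abs_log_term_le) (rule assms)
  have summable: "summable (\<lambda>k. \<bar>\<Sum>j\<in>J k. u k j * ln (x k j)\<bar>)"
    by (rule summable_comparison_test'[OF summable_weights]) (simp add: term_le)
  have "\<bar>\<Sum>k. \<Sum>j\<in>J k. u k j * ln (x k j)\<bar> \<le> (\<Sum>k. \<bar>\<Sum>j\<in>J k. u k j * ln (x k j)\<bar>)"
    by (rule summable_rabs[OF summable])
  also have "\<dots> \<le> bound"
    unfolding bound_def by (intro suminf_le term_le summable summable_weights)
  finally show ?thesis .
qed

lemma integral_log_series_empirical_tendsto:
  fixes \<gamma> :: "nat \<Rightarrow> 'j \<Rightarrow> 'a \<Rightarrow> real"
  assumes W: "prob_space W" and [measurable]: "\<And>k j. \<gamma> k j \<in> borel_measurable W"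
    and \<gamma>_ge: "\<And>k j x. a k \<le> \<gamma> k j x" and \<gamma>_le: "\<And>k j x. \<gamma> k j x \<le> b"
  shows "(\<lambda>R. \<integral>\<omega>. (\<Sum>k. \<Sum>j\<in>J k. u k j * ln (\<Sum>r<R. 1 / real R * \<gamma> k j (\<omega> r))) \<partial>PiM UNIV (\<lambda>_. W))
    \<longlonglongrightarrow> (\<Sum>k. \<Sum>j\<in>J k. u k j * ln (integral\<^sup>L W (\<gamma> k j)))"
proof -
  interpret product_prob_space "\<lambda>_::nat. W" UNIV by (rule product_prob_space_const[OF W])
  define f where "f R k \<omega> = (\<Sum>j\<in>J k. u k j * ln (\<Sum>r<R. 1 / real R * \<gamma> k j (\<omega> r)))"
    for R k and \<omega> :: "nat \<Rightarrow> 'a"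
  define B where "B k = (\<Sum>j\<in>J k. u k j) * (\<bar>ln (a k)\<bar> + \<bar>ln b\<bar>)" for k
  have ln_le: "\<bar>ln (\<Sum>r<R. 1 / real R * \<gamma> k j (\<omega> r))\<bar> \<le> \<bar>ln (a k)\<bar> + \<bar>ln b\<bar>" for R k j \<omega>
    by (rule abs_ln_empirical_mean_le[OF a_pos \<gamma>_ge \<gamma>_le])
  have f_le: "\<bar>f R k \<omega>\<bar> \<le> B k" for R k \<omega>
    unfolding f_def B_def by (rule abs_log_term_le[OF ln_le])
  have [measurable]: "f R k \<in> borel_measurable (PiM UNIV (\<lambda>_. W))" for R k
    unfolding f_def by measurable
  have summable_B: "summable B" unfolding B_def by (rule summable_weights)
  have swap: "(\<integral>\<omega>. (\<Sum>k. f R k \<omega>) \<partial>PiM UNIV (\<lambda>_. W)) = (\<Sum>k. integral\<^sup>L (PiM UNIV (\<lambda>_. W)) (f R k))"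
    for R by (rule P.integral_suminf_bounded[OF _ f_le summable_B]) measurable
  have lim_k: "(\<lambda>R. integral\<^sup>L (PiM UNIV (\<lambda>_. W)) (f R k)) \<longlonglongrightarrow> (\<Sum>j\<in>J k. u k j * ln (integral\<^sup>L W (\<gamma> k j)))"
    for k
  proof -
    have "integral\<^sup>L (PiM UNIV (\<lambda>_. W)) (f R k)
        = (\<Sum>j\<in>J k. u k j * (\<integral>\<omega>. ln (\<Sum>r<R. 1 / real R * \<gamma> k j (\<omega> r)) \<partial>PiM UNIV (\<lambda>_. W)))" for R
    proof -
      have "integrable (PiM UNIV (\<lambda>_. W)) (\<lambda>\<omega>. ln (\<Sum>r<R. 1 / real R * \<gamma> k j (\<omega> r)))" for j
        by (rule P.integral_bounded_le(1)) (measurable, rule ln_le)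
      then show ?thesis unfolding f_def by (simp add: Bochner_Integration.integral_sum)
    qed
    moreover have "(\<lambda>R. \<Sum>j\<in>J k. u k j * (\<integral>\<omega>. ln (\<Sum>r<R. 1 / real R * \<gamma> k j (\<omega> r)) \<partial>PiM UNIV (\<lambda>_. W)))
        \<longlonglongrightarrow> (\<Sum>j\<in>J k. u k j * ln (integral\<^sup>L W (\<gamma> k j)))"
      by (intro tendsto_sum tendsto_mult_left integral_ln_empirical_mean_tendsto[OF W _ a_pos \<gamma>_ge \<gamma>_le])
        measurable
    ultimately show ?thesis by simp
  qed
  have bound_f: "\<forall>\<^sub>F (k, R) in sequentially \<times>\<^sub>F sequentially. norm (integral\<^sup>L (PiM UNIV (\<lambda>_. W)) (f R k)) \<le> B k"
    using P.integral_bounded_le(2)[OF _ f_le] by (intro always_eventually) auto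
  have "(\<lambda>R. \<Sum>k. integral\<^sup>L (PiM UNIV (\<lambda>_. W)) (f R k))
      \<longlonglongrightarrow> (\<Sum>k. \<Sum>j\<in>J k. u k j * ln (integral\<^sup>L W (\<gamma> k j)))"
    by (rule tannerys_theorem[where M=B, THEN conjunct2, THEN conjunct2])
      (use lim_k bound_f summable_B in auto)
  then show ?thesis unfolding swap[symmetric] f_def .
qed

lemma frakL_log_series_tendsto:
  fixes \<gamma> :: "nat \<Rightarrow> 'j \<Rightarrow> (nat \<Rightarrow> nat) \<Rightarrow> real"
  assumes q: "1 \<le> q" and L: "L \<in> S_laws q"
    and [measurable]: "\<And>k j. \<gamma> k j \<in> borel_measurable (Mtau q)"
    and \<gamma>_ge: "\<And>k j \<tau>. a k \<le> \<gamma> k j \<tau>" and \<gamma>_le: "\<And>k j \<tau>. \<gamma> k j \<tau> \<le> b"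
  shows "(\<lambda>R. \<integral>T'. (\<Sum>k. \<Sum>j\<in>J k. u k j * ln (\<Sum>r<R. 1 / real R * \<gamma> k j (T' r))) \<partial>frakL q L)
    \<longlonglongrightarrow> (\<integral>x. (case x of (xi, T) \<Rightarrow> \<Sum>k. \<Sum>j\<in>J k. u k j * ln (\<Sum>\<alpha>. xi \<alpha> * \<gamma> k j (T \<alpha>))) \<partial>L)"
proof (rule frakL_integral_tendsto[OF q L, where C=bound])
  show "(\<lambda>T'. \<Sum>k. \<Sum>j\<in>J k. u k j * ln (\<Sum>r<R. 1 / real R * \<gamma> k j (T' r))) \<in> borel_measurable (MT q)"
    for R by measurable
  show "\<bar>\<Sum>k. \<Sum>j\<in>J k. u k j * ln (\<Sum>r<R. 1 / real R * \<gamma> k j (T' r))\<bar> \<le> bound" for R T'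
    by (rule abs_log_series_le_bound, rule abs_ln_empirical_mean_le[OF a_pos \<gamma>_ge \<gamma>_le])
  show "(\<lambda>x. case x of (xi, T) \<Rightarrow> \<Sum>k. \<Sum>j\<in>J k. u k j * ln (\<Sum>\<alpha>. xi \<alpha> * \<gamma> k j (T \<alpha>)))
      \<in> borel_measurable (Mxi \<Otimes>\<^sub>M MT q)"
    unfolding case_prod_beta by measurable
next
  fix xi T assume xi: "xi \<in> Delta1" and "T \<in> space (MT q)"
  have "integral\<^sup>L (wmeas xi) (\<lambda>\<alpha>. \<gamma> k j (T \<alpha>)) = (\<Sum>\<alpha>. xi \<alpha> * \<gamma> k j (T \<alpha>))" for k j
    by (rule integral_wmeas[OF xi, where B=b]) (use a_pos \<gamma>_ge \<gamma>_le in \<open>smt (verit)\<close>)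
  with integral_log_series_empirical_tendsto[OF prob_space_wmeas[OF xi], of "\<lambda>k j \<alpha>. \<gamma> k j (T \<alpha>)"]
  show "(\<lambda>R. \<integral>\<rho>. (\<Sum>k. \<Sum>j\<in>J k. u k j * ln (\<Sum>r<R. 1 / real R * \<gamma> k j (T (\<rho> r))))
      \<partial>PiM UNIV (\<lambda>_. wmeas xi))
    \<longlonglongrightarrow> (case (xi, T) of (xi, T) \<Rightarrow> \<Sum>k. \<Sum>j\<in>J k. u k j * ln (\<Sum>\<alpha>. xi \<alpha> * \<gamma> k j (T \<alpha>)))"
    using \<gamma>_ge \<gamma>_le by simp
qed

end

section \<open>The functionals \<open>G1\<close> and \<open>G2\<close>\<close>

lemma pois_nonneg: "0 \<le> lam \<Longrightarrow> 0 \<le> pois lam k"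
  by (simp add: pois_def)

lemma summable_pois: "summable (pois lam)"
proof -
  have "summable (\<lambda>k. exp (- lam) * (inverse (fact k) * lam ^ k))"
    by (intro summable_mult summable_exp)
  also have "(\<lambda>k. exp (- lam) * (inverse (fact k) * lam ^ k)) = pois lam"
    by (simp add: pois_def fun_eq_iff divide_inverse)
  finally show ?thesis .
qed

lemma pois_Suc_mult: "pois lam (Suc k) * real (Suc k) = lam * pois lam k"
  by (simp add: pois_def fact_Suc del: of_nat_Suc)

lemma summable_pois_mult_index: "summable (\<lambda>k. pois lam k * real k)"
  by (subst summable_Suc_iff[symmetric], subst pois_Suc_mult) (intro summable_mult summable_pois)

lemma kdelta_bounds: "0 \<le> kdelta x y" "kdelta x y \<le> 1"
  by (auto simp: kdelta_def)

lemma Htil_bounds: "0 \<le> Htil k I \<tau> \<sigma>" "Htil k I \<tau> \<sigma> \<le> real k"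
  using sum_mono[of "{..<k}" "\<lambda>i. kdelta (\<tau> i) (\<sigma> (I i))" "\<lambda>_. 1"]
  by (auto simp: Htil_def kdelta_bounds intro: sum_nonneg)

lemma Hpair_bounds: "0 \<le> Hpair k \<tau>" "Hpair k \<tau> \<le> real k"
  using sum_mono[of "{..<k}" "\<lambda>i. kdelta (\<tau> (2 * i)) (\<tau> (2 * i + 1))" "\<lambda>_. 1"]
  by (auto simp: Hpair_def kdelta_bounds intro: sum_nonneg)

lemma exp_minus_mult_bounds:
  fixes beta h :: real
  assumes "0 \<le> beta" "0 \<le> h" "h \<le> real k"
  shows "exp (- beta * real k) \<le> exp (- beta * h)" "exp (- beta * h) \<le> 1"
  using assms by (auto intro: mult_left_mono)

lemma Zsite_bounds:
  assumes "1 \<le> q" "0 \<le> beta"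
  shows "exp (- beta * real k) \<le> Zsite q N beta k I \<tau>" "Zsite q N beta k I \<tau> \<le> real q ^ N"
proof -
  have spins: "finite (spins q N)" "card (spins q N) = q ^ N"
    by (simp_all add: spins_def card_PiE finite_PiE)
  with assms(1) have "1 \<le> card (spins q N)" by simp
  then have "exp (- beta * real k) \<le> (\<Sum>sg\<in>spins q N. exp (- beta * real k))"
    by simp
  also have "\<dots> \<le> Zsite q N beta k I \<tau>"
    unfolding Zsite_def using assms(2) by (intro sum_mono exp_minus_mult_bounds Htil_bounds)
  finally show "exp (- beta * real k) \<le> Zsite q N beta k I \<tau>" .
  have "Zsite q N beta k I \<tau> \<le> (\<Sum>sg\<in>spins q N. 1)"
    unfolding Zsite_def using assms(2) by (intro sum_mono exp_minus_mult_bounds(2)[where k=k] Htil_bounds)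
  then show "Zsite q N beta k I \<tau> \<le> real q ^ N" by (simp add: spins)
qed

lemma measurable_Zsite [measurable]: "Zsite q N beta k I \<in> borel_measurable (Mtau q)"
  unfolding Zsite_def Htil_def kdelta_def by measurable

lemma measurable_exp_Hpair [measurable]: "(\<lambda>\<tau>. exp (- beta * Hpair k \<tau>)) \<in> borel_measurable (Mtau q)"
  unfolding Hpair_def kdelta_def by measurable

lemma EI_eq_log_series:
  "EI N c (\<lambda>k I. 1 / real N * ln (X k I)) =
   (\<Sum>k. \<Sum>I\<in>PiE {..<k} (\<lambda>_. {1..N}). pois (c * real N) k / real N ^ k / real N * ln (X k I))"
  unfolding EI_def
  by (rule arg_cong[where f=suminf], rule ext)
     (simp add: sum_distrib_left sum_divide_distrib[symmetric] mult.assoc)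

lemma weighted_log_series_G1:
  assumes "1 \<le> q" "1 \<le> N" "0 \<le> beta" "0 \<le> c"
  shows "weighted_log_series (\<lambda>k. PiE {..<k} (\<lambda>_. {1..N}))
    (\<lambda>k I. pois (c * real N) k / real N ^ k / real N) (\<lambda>k. exp (- beta * real k)) (real q ^ N)"
proof
  have weights: "(\<Sum>I\<in>PiE {..<k} (\<lambda>_. {1..N}). pois (c * real N) k / real N ^ k / real N)
      * (\<bar>ln (exp (- beta * real k))\<bar> + \<bar>ln (real q ^ N)\<bar>)
    = beta / real N * (pois (c * real N) k * real k) + ln (real q ^ N) / real N * pois (c * real N) k"
    for k
    using assms by (simp add: card_PiE field_simps)
  show "summable (\<lambda>k. (\<Sum>I\<in>PiE {..<k} (\<lambda>_. {1..N}). pois (c * real N) k / real N ^ k / real N)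
      * (\<bar>ln (exp (- beta * real k))\<bar> + \<bar>ln (real q ^ N)\<bar>))"
    unfolding weights by (intro summable_add summable_mult summable_pois summable_pois_mult_index)
qed (use assms in \<open>simp_all add: pois_nonneg\<close>)

lemma weighted_log_series_G2:
  assumes "0 \<le> beta" "0 \<le> c"
  shows "weighted_log_series (\<lambda>_. {()}) (\<lambda>k _. pois (c * real N / 2) k / real N)
    (\<lambda>k. exp (- beta * real k)) 1"
proof
  have weights: "(\<Sum>j\<in>{()}. pois (c * real N / 2) k / real N) * (\<bar>ln (exp (- beta * real k))\<bar> + \<bar>ln 1\<bar>)
    = beta / real N * (pois (c * real N / 2) k * real k)" for k
    using assms by simp
  show "summable (\<lambda>k. (\<Sum>j\<in>{()}. pois (c * real N / 2) k / real N)
      * (\<bar>ln (exp (- beta * real k))\<bar> + \<bar>ln 1\<bar>))"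
    unfolding weights by (intro summable_mult summable_pois_mult_index)
qed (use assms in \<open>simp_all add: pois_nonneg\<close>)

lemma G1R_tendsto_G1:
  assumes q: "1 \<le> q" and "1 \<le> N" "0 \<le> beta" "0 \<le> c" and L: "L \<in> S_laws q"
  shows "(\<lambda>R. G1R q N R beta c (frakL q L)) \<longlonglongrightarrow> G1 q N beta c L"
proof -
  interpret weighted_log_series "\<lambda>k. PiE {..<k} (\<lambda>_. {1..N})"
    "\<lambda>k I. pois (c * real N) k / real N ^ k / real N" "\<lambda>k. exp (- beta * real k)" "real q ^ N"
    by (rule weighted_log_series_G1) (use assms in auto)
  show ?thesis
    unfolding G1R_def G1_def EI_eq_log_series
    by (rule frakL_log_series_tendsto[OF q L]) (use Zsite_bounds assms in auto)
qed

lemma G2R_tendsto_G2: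
  assumes q: "1 \<le> q" and "0 \<le> beta" "0 \<le> c" and L: "L \<in> S_laws q"
  shows "(\<lambda>R. G2R N R beta c (frakL q L)) \<longlonglongrightarrow> G2 N beta c L"
proof -
  interpret weighted_log_series "\<lambda>_. {()}" "\<lambda>k _. pois (c * real N / 2) k / real N"
    "\<lambda>k. exp (- beta * real k)" 1
    by (rule weighted_log_series_G2) (use assms in auto)
  have "(\<lambda>R. \<integral>T'. (\<Sum>k. \<Sum>j\<in>{()}. pois (c * real N / 2) k / real N
      * ln (\<Sum>r<R. 1 / real R * exp (- beta * Hpair k (T' r)))) \<partial>frakL q L)
    \<longlonglongrightarrow> (\<integral>x. (case x of (xi, T) \<Rightarrow> \<Sum>k. \<Sum>j\<in>{()}. pois (c * real N / 2) k / real N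
      * ln (\<Sum>\<alpha>. xi \<alpha> * exp (- beta * Hpair k (T \<alpha>)))) \<partial>L)"
    by (rule frakL_log_series_tendsto[OF q L measurable_exp_Hpair])
      (use exp_minus_mult_bounds[OF _ Hpair_bounds] assms in auto)
  then show ?thesis unfolding G2R_def G2_def by simp
qed

theorem mainTheorem15:
  fixes q N :: nat and beta c :: real
    and L :: "((nat \<Rightarrow> real) \<times> (nat \<Rightarrow> nat \<Rightarrow> nat)) measure"
  assumes "q \<ge> 2" and "N \<ge> 1" and "beta \<ge> 0" and "c \<ge> 0"
    and "L \<in> S_laws q"
  shows "(\<lambda>R. G1R q N R beta c (frakL q L)) \<longlonglongrightarrow> G1 q N beta c L
       \<and> (\<lambda>R. G2R N R beta c (frakL q L)) \<longlonglongrightarrow> G2 N beta c L"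
proof -
  have "1 \<le> q" using assms(1) by simp
  with assms show ?thesis using G1R_tendsto_G1 G2R_tendsto_G2 by blast
qed

end
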